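(* Let $G$ be a topological group acting continuously on a topological space $X$, let $\Delta$ be the partition of $X$ into $G$-orbits, $Y=X/G$ with the quotient topology, and $p:X\to Y$ the projection. Suppose that (a) $X$ is a Hausdorff Baire space; (b) $G=\bigcup_{i=1}^\infty G_i$ is a union of countably many compact sets $G_i$; (c) the action has at least two distinct orbits; (d) each orbit is dense in $X$. Then $p$ has property (CONT) but does not have property (COMP).
   Context: A Baire space is a topological space that is not a countable union of nowhere dense subsets of itself. A $\Delta$-map is a continuous $h:X\to X$ mapping each element of $\Delta$ into some element of $\Delta$; $\mathrm{End}(X,\Delta)$ is the monoid of $\Delta$-maps, $\mathrm{End}(Y)=C(Y,Y)$, and $\psi(h)$ is the unique map with $p\circ h=\psi(h)\circ p$. Property (COMP): for every compact $L\subset Y$ there is a compact $K\subset X$ with $p(K)=L$. Property (CONT): $\psi:\mathrm{End}(X,\Delta)\to\mathrm{End}(Y)$ is continuous with respect to compact open topologies. *)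

theory Defs
  imports "HOL-Analysis.Analysis"
begin

definition topological_group ::
  "'g topology \<Rightarrow> ('g \<Rightarrow> 'g \<Rightarrow> 'g) \<Rightarrow> ('g \<Rightarrow> 'g) \<Rightarrow> 'g \<Rightarrow> bool" where
  "topological_group TG gmul ginv e \<longleftrightarrow>
     e \<in> topspace TG \<and>
     (\<forall>a\<in>topspace TG. \<forall>b\<in>topspace TG. gmul a b \<in> topspace TG) \<and>
     (\<forall>a\<in>topspace TG. ginv a \<in> topspace TG) \<and>
     (\<forall>a\<in>topspace TG. \<forall>b\<in>topspace TG. \<forall>c\<in>topspace TG.
         gmul (gmul a b) c = gmul a (gmul b c)) \<and>
     (\<forall>a\<in>topspace TG. gmul e a = a \<and> gmul a e = a) \<and>
     (\<forall>a\<in>topspace TG. gmul (ginv a) a = e \<and> gmul a (ginv a) = e) \<and>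
     continuous_map (prod_topology TG TG) TG (\<lambda>(a, b). gmul a b) \<and>
     continuous_map TG TG ginv"

definition continuous_action ::
  "'g topology \<Rightarrow> ('g \<Rightarrow> 'g \<Rightarrow> 'g) \<Rightarrow> 'g \<Rightarrow> 'x topology \<Rightarrow> ('g \<Rightarrow> 'x \<Rightarrow> 'x) \<Rightarrow> bool" where
  "continuous_action TG gmul e X act \<longleftrightarrow>
     continuous_map (prod_topology TG X) X (\<lambda>(g, x). act g x) \<and>
     (\<forall>x\<in>topspace X. act e x = x) \<and>
     (\<forall>g\<in>topspace TG. \<forall>h\<in>topspace TG. \<forall>x\<in>topspace X.
         act (gmul g h) x = act g (act h x))"

definition orbit :: "'g topology \<Rightarrow> ('g \<Rightarrow> 'x \<Rightarrow> 'x) \<Rightarrow> 'x \<Rightarrow> 'x set" where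
  "orbit TG act x = {act g x | g. g \<in> topspace TG}"

text \<open>The partition \<Delta> of X into orbits (= the points of Y = X/G).\<close>
definition orbits :: "'g topology \<Rightarrow> 'x topology \<Rightarrow> ('g \<Rightarrow> 'x \<Rightarrow> 'x) \<Rightarrow> 'x set set" where
  "orbits TG X act = {orbit TG act x | x. x \<in> topspace X}"

definition quotient_topology :: "'x topology \<Rightarrow> ('x \<Rightarrow> 'y) \<Rightarrow> 'y set \<Rightarrow> 'y topology" where
  "quotient_topology X p Q =
     topology (\<lambda>U. U \<subseteq> Q \<and> openin X {x \<in> topspace X. p x \<in> U})"

definition nowhere_dense_in :: "'a topology \<Rightarrow> 'a set \<Rightarrow> bool" where
  "nowhere_dense_in X A \<longleftrightarrow> A \<subseteq> topspace X \<and> X interior_of (X closure_of A) = {}"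

definition Baire_space :: "'a topology \<Rightarrow> bool" where
  "Baire_space X \<longleftrightarrow>
     \<not> (\<exists>\<N>. countable \<N> \<and> (\<forall>N\<in>\<N>. nowhere_dense_in X N) \<and> \<Union>\<N> = topspace X)"

text \<open>Compact-open topology on a set S of maps from X to Y (maps are taken
  extensional, i.e. equal to undefined outside topspace X, so that they are
  determined by their values on X).\<close>
definition compact_open_topology ::
  "'a topology \<Rightarrow> 'b topology \<Rightarrow> ('a \<Rightarrow> 'b) set \<Rightarrow> ('a \<Rightarrow> 'b) topology" where
  "compact_open_topology X Y S =
     subtopology
       (topology_generated_by {{f. f ` K \<subseteq> U} | K U. compactin X K \<and> openin Y U}) S"

definition End_Delta :: "'x topology \<Rightarrow> 'x set set \<Rightarrow> ('x \<Rightarrow> 'x) set" where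
  "End_Delta X \<Delta> =
     {h. continuous_map X X h \<and> h \<in> extensional (topspace X) \<and>
         (\<forall>D\<in>\<Delta>. \<exists>E\<in>\<Delta>. h ` D \<subseteq> E)}"

definition End_space :: "'y topology \<Rightarrow> ('y \<Rightarrow> 'y) set" where
  "End_space Y = {f. continuous_map Y Y f \<and> f \<in> extensional (topspace Y)}"

text \<open>psi h is the (unique extensional) map with p o h = psi h o p.\<close>
definition psi_map ::
  "'x topology \<Rightarrow> ('x \<Rightarrow> 'y) \<Rightarrow> 'y set \<Rightarrow> ('x \<Rightarrow> 'x) \<Rightarrow> 'y \<Rightarrow> 'y" where
  "psi_map X p Q h =
     (\<lambda>y. if y \<in> Q then p (h (SOME x. x \<in> topspace X \<and> p x = y)) else undefined)"

definition prop_COMP :: "'x topology \<Rightarrow> 'y topology \<Rightarrow> ('x \<Rightarrow> 'y) \<Rightarrow> bool" where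
  "prop_COMP X Y p \<longleftrightarrow>
     (\<forall>L. compactin Y L \<longrightarrow> (\<exists>K. compactin X K \<and> p ` K = L))"

definition prop_CONT ::
  "'x topology \<Rightarrow> 'x set set \<Rightarrow> 'y topology \<Rightarrow> ('x \<Rightarrow> 'y) \<Rightarrow> bool" where
  "prop_CONT X \<Delta> Y p \<longleftrightarrow>
     continuous_map
       (compact_open_topology X X (End_Delta X \<Delta>))
       (compact_open_topology Y Y (End_space Y))
       (psi_map X p (topspace Y))"

end

theory Submission
  imports Defs
begin

text \<open>Density of the orbits makes the orbit space indiscrete. Hence every map into it is
  continuous, the compact-open topology on its self-maps is indiscrete too, and every subset
  of it is compact; in particular (CONT) holds. If (COMP) held, the complement of one orbit
  would be the image of a compact set \<open>K\<close>, and \<open>X\<close> would be the countable union of the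
  compact, hence closed, sets \<open>G\<^sub>i K\<close> and \<open>G\<^sub>i x\<close>. By the Baire property one of them has
  interior, and as every orbit is dense, every orbit would meet it; this is impossible for
  both kinds of sets.\<close>

definition indiscrete_space :: "'a topology \<Rightarrow> bool" where
  "indiscrete_space T \<longleftrightarrow> (\<forall>U. openin T U \<longrightarrow> U = {} \<or> U = topspace T)"

lemma continuous_map_into_indiscrete:
  assumes "indiscrete_space T" and "f \<in> topspace S \<rightarrow> topspace T"
  shows "continuous_map S T f"
  unfolding continuous_map_def
proof (intro conjI allI impI assms(2))
  fix U assume "openin T U"
  with assms(1) have "U = {} \<or> U = topspace T"
    by (simp add: indiscrete_space_def)
  with assms(2) consider "{x \<in> topspace S. f x \<in> U} = {}" | "{x \<in> topspace S. f x \<in> U} = topspace S"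
    by blast
  then show "openin S {x \<in> topspace S. f x \<in> U}"
    by cases (simp_all only: openin_empty openin_topspace)
qed

lemma compactin_indiscrete:
  assumes "indiscrete_space T" and "L \<subseteq> topspace T"
  shows "compactin T L"
  unfolding compactin_def
proof (intro conjI allI impI assms(2))
  fix \<U> assume \<U>: "(\<forall>U\<in>\<U>. openin T U) \<and> L \<subseteq> \<Union>\<U>"
  show "\<exists>\<F>. finite \<F> \<and> \<F> \<subseteq> \<U> \<and> L \<subseteq> \<Union>\<F>"
  proof (cases "L = {}")
    case False
    then obtain U where "U \<in> \<U>" "U \<noteq> {}"
      using \<U> by blast
    with assms(1) \<U> have "U = topspace T"
      unfolding indiscrete_space_def by blast
    with \<open>U \<in> \<U>\<close> assms(2) show ?thesis
      by (intro exI[of _ "{U}"]) auto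
  qed blast
qed

lemma Baire_space_closed_cover_interior:
  assumes "Baire_space X" "countable \<N>" "\<And>N. N \<in> \<N> \<Longrightarrow> closedin X N" "\<Union>\<N> = topspace X"
  shows "\<exists>N\<in>\<N>. X interior_of N \<noteq> {}"
proof (rule ccontr)
  assume "\<not> ?thesis"
  then have "\<forall>N\<in>\<N>. nowhere_dense_in X N"
    using assms(3) by (simp add: nowhere_dense_in_def closure_of_closedin closedin_subset)
  with assms(1,2,4) show False
    unfolding Baire_space_def by blast
qed

lemma openin_quotient_topology:
  "openin (quotient_topology X p Q) U \<longleftrightarrow> U \<subseteq> Q \<and> openin X {x \<in> topspace X. p x \<in> U}"
proof -
  have "istopology (\<lambda>U. U \<subseteq> Q \<and> openin X {x \<in> topspace X. p x \<in> U})"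
    unfolding istopology_def
  proof (rule conjI; intro allI impI)
    fix S T
    have "{x \<in> topspace X. p x \<in> S \<inter> T}
        = {x \<in> topspace X. p x \<in> S} \<inter> {x \<in> topspace X. p x \<in> T}"
      by blast
    then show "S \<inter> T \<subseteq> Q \<and> openin X {x \<in> topspace X. p x \<in> S \<inter> T}"
      if "S \<subseteq> Q \<and> openin X {x \<in> topspace X. p x \<in> S}"
        "T \<subseteq> Q \<and> openin X {x \<in> topspace X. p x \<in> T}"
      using that by auto
  next
    fix \<K>
    have "{x \<in> topspace X. p x \<in> \<Union>\<K>} = (\<Union>S\<in>\<K>. {x \<in> topspace X. p x \<in> S})"
      by blast
    then show "\<Union>\<K> \<subseteq> Q \<and> openin X {x \<in> topspace X. p x \<in> \<Union>\<K>}"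
      if "\<forall>S\<in>\<K>. S \<subseteq> Q \<and> openin X {x \<in> topspace X. p x \<in> S}"
      using that by auto
  qed
  from topology_inverse'[OF this] show ?thesis
    unfolding quotient_topology_def by simp
qed

lemma topspace_quotient_topology:
  assumes "p \<in> topspace X \<rightarrow> Q"
  shows "topspace (quotient_topology X p Q) = Q"
proof -
  have "{x \<in> topspace X. p x \<in> Q} = topspace X"
    using assms by auto
  then have "openin (quotient_topology X p Q) Q"
    by (simp add: openin_quotient_topology)
  moreover have "topspace (quotient_topology X p Q) \<subseteq> Q"
    using openin_topspace[of "quotient_topology X p Q"]
    unfolding openin_quotient_topology by blast
  ultimately show ?thesis
    using openin_subset[of "quotient_topology X p Q" Q] by blast
qed

text \<open>A saturated open set missing one dense fibre is empty.\<close>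

lemma quotient_topology_indiscrete:
  assumes onto: "p ` topspace X = Q"
    and dense_fibres: "\<And>y. y \<in> Q \<Longrightarrow> X closure_of {x \<in> topspace X. p x = y} = topspace X"
  shows "indiscrete_space (quotient_topology X p Q)"
  unfolding indiscrete_space_def
proof (intro allI impI; rule ccontr)
  fix U assume U: "openin (quotient_topology X p Q) U"
  assume nontrivial: "\<not> (U = {} \<or> U = topspace (quotient_topology X p Q))"
  have "topspace (quotient_topology X p Q) = Q"
    using onto by (intro topspace_quotient_topology) auto
  moreover have "U \<subseteq> Q" and open_preimage: "openin X {x \<in> topspace X. p x \<in> U}"
    using U unfolding openin_quotient_topology by blast+
  ultimately obtain u y where "u \<in> U" "y \<in> Q" "y \<notin> U"
    using nontrivial by blast
  then have "{x \<in> topspace X. p x = y} \<inter> {x \<in> topspace X. p x \<in> U} = {}"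
    and "{x \<in> topspace X. p x \<in> U} \<noteq> {}"
    using onto \<open>U \<subseteq> Q\<close> by blast+
  with dense_fibres[OF \<open>y \<in> Q\<close>] open_preimage show False
    unfolding dense_intersects_open by blast
qed

lemma topspace_compact_open_topology:
  "topspace (compact_open_topology X Y S) = S"
proof -
  have "UNIV \<in> {{f. f ` K \<subseteq> U} | K U. compactin X K \<and> openin Y U}"
    by (intro CollectI exI[of _ "{}"]) auto
  then show ?thesis
    unfolding compact_open_topology_def by auto
qed

text \<open>A subbasic set \<open>{f. f ` K \<subseteq> U}\<close> is everything or nothing, as \<open>U\<close> is empty or the
  whole space; so the compact-open topology is indiscrete as well.\<close>

lemma compact_open_topology_indiscrete:
  assumes indiscrete: "indiscrete_space Y"
    and maps: "\<And>f. f \<in> S \<Longrightarrow> f ` topspace X \<subseteq> topspace Y"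
  shows "indiscrete_space (compact_open_topology X Y S)"
  unfolding indiscrete_space_def
proof (intro allI impI)
  fix W assume W: "openin (compact_open_topology X Y S) W"
  have trivial_trace: "V \<inter> S = {} \<or> S \<subseteq> V"
    if "generate_topology_on {{f. f ` K \<subseteq> U} | K U. compactin X K \<and> openin Y U} V" for V
    using that
  proof (induction rule: generate_topology_on.induct)
    case (Basis s)
    then obtain K U where s: "s = {f. f ` K \<subseteq> U}" and K: "compactin X K" and "openin Y U"
      by blast
    then consider "U = {}" | "U = topspace Y"
      using indiscrete unfolding indiscrete_space_def by blast
    then show ?case
    proof cases
      case 1
      then show ?thesis
        using s by (cases "K = {}") auto
    next
      case 2
      then have "S \<subseteq> s"
        using s maps compactin_subset_topspace[OF K] by blast
      then show ?thesis ..
    qed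
  qed blast+
  from W obtain V where
    "generate_topology_on {{f. f ` K \<subseteq> U} | K U. compactin X K \<and> openin Y U} V" "W = V \<inter> S"
    unfolding compact_open_topology_def openin_subtopology openin_topology_generated_by_iff
    by blast
  with trivial_trace show "W = {} \<or> W = topspace (compact_open_topology X Y S)"
    unfolding topspace_compact_open_topology by blast
qed

lemma psi_map_in_End_space:
  assumes onto: "p ` topspace X = topspace Y"
    and indiscrete: "indiscrete_space Y"
    and h: "h \<in> topspace X \<rightarrow> topspace X"
  shows "psi_map X p (topspace Y) h \<in> End_space Y"
proof -
  have "psi_map X p (topspace Y) h y \<in> topspace Y" if "y \<in> topspace Y" for y
  proof -
    have "\<exists>x. x \<in> topspace X \<and> p x = y"
      using that unfolding onto[symmetric] by blast
    then have "(SOME x. x \<in> topspace X \<and> p x = y) \<in> topspace X"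
      by (rule someI_ex[THEN conjunct1])
    then have "p (h (SOME x. x \<in> topspace X \<and> p x = y)) \<in> p ` topspace X"
      using h by blast
    with that show ?thesis
      unfolding psi_map_def onto by simp
  qed
  then have "continuous_map Y Y (psi_map X p (topspace Y) h)"
    by (intro continuous_map_into_indiscrete[OF indiscrete] Pi_I)
  moreover have "psi_map X p (topspace Y) h \<in> extensional (topspace Y)"
    by (simp add: psi_map_def extensional_def)
  ultimately show ?thesis
    by (simp add: End_space_def)
qed

lemma prop_CONT_indiscrete:
  assumes onto: "p ` topspace X = topspace Y" and indiscrete: "indiscrete_space Y"
  shows "prop_CONT X \<Delta> Y p"
  unfolding prop_CONT_def
proof (rule continuous_map_into_indiscrete)
  show "indiscrete_space (compact_open_topology Y Y (End_space Y))"
    using indiscrete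
    by (rule compact_open_topology_indiscrete)
      (auto simp: End_space_def dest: continuous_map_image_subset_topspace)
  have "psi_map X p (topspace Y) h \<in> End_space Y" if "h \<in> End_Delta X \<Delta>" for h
    using that unfolding End_Delta_def
    by (intro psi_map_in_End_space[OF onto indiscrete]) (auto dest: continuous_map_funspace)
  then show "psi_map X p (topspace Y)
      \<in> topspace (compact_open_topology X X (End_Delta X \<Delta>))
        \<rightarrow> topspace (compact_open_topology Y Y (End_space Y))"
    unfolding topspace_compact_open_topology by blast
qed

locale continuous_group_action =
  fixes TG :: "'g topology" and gmul :: "'g \<Rightarrow> 'g \<Rightarrow> 'g" and ginv :: "'g \<Rightarrow> 'g" and e :: 'g
    and X :: "'x topology" and act :: "'g \<Rightarrow> 'x \<Rightarrow> 'x"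
  assumes group: "topological_group TG gmul ginv e"
    and action: "continuous_action TG gmul e X act"
begin

lemma continuous_map_act: "continuous_map (prod_topology TG X) X (\<lambda>(g, x). act g x)"
  using action by (simp add: continuous_action_def)

lemma act_in_topspace: "g \<in> topspace TG \<Longrightarrow> x \<in> topspace X \<Longrightarrow> act g x \<in> topspace X"
  using Pi_mem[OF continuous_map_funspace[OF continuous_map_act], of "(g, x)"] by simp

lemma orbit_subset_topspace: "x \<in> topspace X \<Longrightarrow> orbit TG act x \<subseteq> topspace X"
  by (auto simp: orbit_def act_in_topspace)

lemma in_orbit_self: "x \<in> topspace X \<Longrightarrow> x \<in> orbit TG act x"
  using group action unfolding orbit_def topological_group_def continuous_action_def by force

lemma orbit_subset:
  assumes "x \<in> topspace X" "y \<in> orbit TG act x"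
  shows "orbit TG act y \<subseteq> orbit TG act x"
proof
  fix z assume "z \<in> orbit TG act y"
  then obtain h where h: "h \<in> topspace TG" "z = act h y"
    by (auto simp: orbit_def)
  obtain g where g: "g \<in> topspace TG" "y = act g x"
    using assms(2) by (auto simp: orbit_def)
  have "z = act (gmul h g) x" "gmul h g \<in> topspace TG"
    using h g assms(1) group action
    unfolding topological_group_def continuous_action_def by auto
  then show "z \<in> orbit TG act x"
    by (auto simp: orbit_def)
qed

lemma orbit_eq:
  assumes x: "x \<in> topspace X" and y: "y \<in> orbit TG act x"
  shows "orbit TG act y = orbit TG act x"
proof
  obtain g where g: "g \<in> topspace TG" "y = act g x"
    using y by (auto simp: orbit_def)
  then have "x = act (ginv g) y" "ginv g \<in> topspace TG"
    using x group action unfolding topological_group_def continuous_action_def by auto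
  then have "x \<in> orbit TG act y"
    by (auto simp: orbit_def)
  moreover have "y \<in> topspace X"
    using g x by (simp add: act_in_topspace)
  ultimately show "orbit TG act x \<subseteq> orbit TG act y"
    by (intro orbit_subset)
qed (use assms in \<open>rule orbit_subset\<close>)

lemma orbit_fibre:
  assumes "x \<in> topspace X"
  shows "{z \<in> topspace X. orbit TG act z = orbit TG act x} = orbit TG act x"
  using assms orbit_eq in_orbit_self orbit_subset_topspace by blast

lemma image_orbit_topspace: "orbit TG act ` topspace X = orbits TG X act"
  by (auto simp: orbits_def)

lemma topspace_orbit_quotient:
  "topspace (quotient_topology X (orbit TG act) (orbits TG X act)) = orbits TG X act"
  by (rule topspace_quotient_topology) (auto simp: image_orbit_topspace[symmetric])

lemma orbit_quotient_indiscrete: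
  assumes dense_orbits: "\<And>x. x \<in> topspace X \<Longrightarrow> X closure_of (orbit TG act x) = topspace X"
  shows "indiscrete_space (quotient_topology X (orbit TG act) (orbits TG X act))"
  using image_orbit_topspace
proof (rule quotient_topology_indiscrete)
  fix D assume "D \<in> orbits TG X act"
  then obtain x where "x \<in> topspace X" "D = orbit TG act x"
    by (auto simp: orbits_def)
  then show "X closure_of {z \<in> topspace X. orbit TG act z = D} = topspace X"
    by (simp add: orbit_fibre dense_orbits)
qed

lemma closedin_act_image:
  assumes "Hausdorff_space X" "compactin TG C" "compactin X K"
  shows "closedin X ((\<lambda>(g, k). act g k) ` (C \<times> K))"
proof -
  have "compactin (prod_topology TG X) (C \<times> K)"
    using assms by (simp add: compactin_Times)
  with assms(1) show ?thesis
    by (intro compactin_imp_closedin image_compactin[OF _ continuous_map_act])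
qed

text \<open>If \<open>X\<close> is covered by the orbits of countably many compact sets \<open>K j\<close>, it is covered by
  the countably many closed sets \<open>G\<^sub>i K\<^sub>j\<close>; one of them has interior, which every (dense)
  orbit meets.\<close>

lemma Baire_compact_orbit_transversal:
  fixes Gi :: "nat \<Rightarrow> 'g set" and K :: "nat \<Rightarrow> 'x set"
  assumes Hausdorff: "Hausdorff_space X" and Baire: "Baire_space X"
    and Gi_compact: "\<And>i. compactin TG (Gi i)" and G_union: "topspace TG = (\<Union>i. Gi i)"
    and dense_orbits: "\<And>x. x \<in> topspace X \<Longrightarrow> X closure_of (orbit TG act x) = topspace X"
    and K_compact: "\<And>j. compactin X (K j)"
    and cover: "topspace X \<subseteq> (\<Union>j. \<Union>k\<in>K j. orbit TG act k)"
  shows "\<exists>j. \<forall>x\<in>topspace X. \<exists>k\<in>K j. orbit TG act x = orbit TG act k"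
proof -
  define C where "C i j = (\<lambda>(g, k). act g k) ` (Gi i \<times> K j)" for i j
  have closed: "closedin X (C i j)" for i j
    unfolding C_def using Hausdorff Gi_compact K_compact by (rule closedin_act_image)
  have "topspace X \<subseteq> (\<Union>(i, j). C i j)"
  proof
    fix z assume "z \<in> topspace X"
    with cover obtain j k g where "k \<in> K j" "g \<in> topspace TG" "z = act g k"
      by (auto simp: orbit_def)
    moreover from this G_union obtain i where "g \<in> Gi i"
      by blast
    ultimately have "z \<in> C i j"
      by (auto simp: C_def)
    then show "z \<in> (\<Union>(i, j). C i j)"
      by blast
  qed
  moreover have "(\<Union>(i, j). C i j) \<subseteq> topspace X"
    using closed closedin_subset by blast
  ultimately have "\<Union>(case_prod C ` UNIV) = topspace X"
    by (rule subset_antisym[rotated])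
  moreover have "closedin X N" if "N \<in> case_prod C ` UNIV" for N
    using that closed by auto
  moreover have "countable (case_prod C ` UNIV)"
    by simp
  ultimately obtain N where "N \<in> case_prod C ` UNIV" "X interior_of N \<noteq> {}"
    using Baire_space_closed_cover_interior[OF Baire] by metis
  then obtain i j where "X interior_of C i j \<noteq> {}"
    by auto
  show ?thesis
  proof (rule exI[of _ j], intro ballI)
    fix x assume x: "x \<in> topspace X"
    have "orbit TG act x \<inter> X interior_of C i j \<noteq> {}"
      using dense_orbits[OF x] \<open>X interior_of C i j \<noteq> {}\<close> openin_interior_of
      unfolding dense_intersects_open by blast
    then obtain z where z: "z \<in> orbit TG act x" "z \<in> C i j"
      using interior_of_subset[of X "C i j"] by blast
    then obtain g k where "g \<in> Gi i" "k \<in> K j" "z = act g k"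
      by (auto simp: C_def)
    moreover have "k \<in> topspace X"
      using \<open>k \<in> K j\<close> K_compact compactin_subset_topspace by blast
    ultimately have "orbit TG act z = orbit TG act k"
      using G_union by (intro orbit_eq) (auto simp: orbit_def)
    with orbit_eq[OF x z(1)] show "\<exists>k\<in>K j. orbit TG act x = orbit TG act k"
      using \<open>k \<in> K j\<close> by auto
  qed
qed

lemma orbit_quotient_not_COMP:
  fixes Gi :: "nat \<Rightarrow> 'g set"
  assumes Hausdorff: "Hausdorff_space X" and Baire: "Baire_space X"
    and Gi_compact: "\<And>i. compactin TG (Gi i)" and G_union: "topspace TG = (\<Union>i. Gi i)"
    and two_orbits: "\<exists>x\<in>topspace X. \<exists>x'\<in>topspace X. orbit TG act x \<noteq> orbit TG act x'"
    and dense_orbits: "\<And>x. x \<in> topspace X \<Longrightarrow> X closure_of (orbit TG act x) = topspace X"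
  shows "\<not> prop_COMP X (quotient_topology X (orbit TG act) (orbits TG X act)) (orbit TG act)"
proof
  define Y where "Y = quotient_topology X (orbit TG act) (orbits TG X act)"
  assume "prop_COMP X Y (orbit TG act)"
  obtain x x' where x: "x \<in> topspace X" and x': "x' \<in> topspace X"
    and distinct: "orbit TG act x \<noteq> orbit TG act x'"
    using two_orbits by blast
  have "indiscrete_space Y"
    using dense_orbits unfolding Y_def by (rule orbit_quotient_indiscrete)
  then have "compactin Y (orbits TG X act - {orbit TG act x})"
    by (rule compactin_indiscrete) (auto simp: Y_def topspace_orbit_quotient)
  with \<open>prop_COMP X Y (orbit TG act)\<close> obtain K where
    K: "compactin X K" and K_orbits: "orbit TG act ` K = orbits TG X act - {orbit TG act x}"
    unfolding prop_COMP_def by blast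
  define Ks where "Ks = case_nat K (\<lambda>_. {x})"
  have cover: "topspace X \<subseteq> (\<Union>j. \<Union>k\<in>Ks j. orbit TG act k)"
  proof
    fix z assume z: "z \<in> topspace X"
    show "z \<in> (\<Union>j. \<Union>k\<in>Ks j. orbit TG act k)"
    proof (cases "orbit TG act z = orbit TG act x")
      case True
      then have "z \<in> orbit TG act x \<and> x \<in> Ks 1"
        using in_orbit_self[OF z] by (simp add: Ks_def)
      then show ?thesis
        by blast
    next
      case False
      with z have "orbit TG act z \<in> orbit TG act ` K"
        unfolding K_orbits by (auto simp: orbits_def)
      then obtain k where "k \<in> K" "orbit TG act z = orbit TG act k"
        by blast
      then have "z \<in> orbit TG act k \<and> k \<in> Ks 0"
        using in_orbit_self[OF z] by (simp add: Ks_def)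
      then show ?thesis
        by blast
    qed
  qed
  have Ks_compact: "compactin X (Ks j)" for j
    using K x by (simp add: Ks_def split: nat.split)
  obtain j where j: "\<forall>z\<in>topspace X. \<exists>k\<in>Ks j. orbit TG act z = orbit TG act k"
    using Hausdorff Baire Gi_compact G_union dense_orbits Ks_compact cover
    by (rule Baire_compact_orbit_transversal[THEN exE])
  show False
  proof (cases j)
    case 0
    then obtain k where "k \<in> K" "orbit TG act x = orbit TG act k"
      using j x by (auto simp: Ks_def)
    moreover have "orbit TG act k \<noteq> orbit TG act x"
      using K_orbits \<open>k \<in> K\<close> by blast
    ultimately show False
      by simp
  next
    case Suc
    then show False
      using j x' distinct by (simp add: Ks_def)
  qed
qed

end

theorem mainTheorem10:
  fixes TG :: "'g topology" and gmul :: "'g \<Rightarrow> 'g \<Rightarrow> 'g" and ginv :: "'g \<Rightarrow> 'g" and e :: 'g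
    and X :: "'x topology" and act :: "'g \<Rightarrow> 'x \<Rightarrow> 'x"
    and Gi :: "nat \<Rightarrow> 'g set"
  assumes grp: "topological_group TG gmul ginv e"
    and action: "continuous_action TG gmul e X act"
    and Hausdorff: "Hausdorff_space X"
    and Baire: "Baire_space X"
    and Gi_compact: "\<And>i. compactin TG (Gi i)"
    and G_union: "topspace TG = (\<Union>i. Gi i)"
    and two_orbits: "\<exists>x\<in>topspace X. \<exists>x'\<in>topspace X. orbit TG act x \<noteq> orbit TG act x'"
    and dense_orbits: "\<And>x. x \<in> topspace X \<Longrightarrow> X closure_of (orbit TG act x) = topspace X"
  shows "prop_CONT X (orbits TG X act)
           (quotient_topology X (orbit TG act) (orbits TG X act)) (orbit TG act)
       \<and> \<not> prop_COMP X (quotient_topology X (orbit TG act) (orbits TG X act)) (orbit TG act)"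
proof
  interpret continuous_group_action TG gmul ginv e X act
    using grp action by unfold_locales
  have "orbit TG act ` topspace X = topspace (quotient_topology X (orbit TG act) (orbits TG X act))"
    by (simp add: topspace_orbit_quotient image_orbit_topspace)
  moreover have "indiscrete_space (quotient_topology X (orbit TG act) (orbits TG X act))"
    using dense_orbits by (rule orbit_quotient_indiscrete)
  ultimately show "prop_CONT X (orbits TG X act)
          (quotient_topology X (orbit TG act) (orbits TG X act)) (orbit TG act)"
    by (rule prop_CONT_indiscrete)
  show "\<not> prop_COMP X (quotient_topology X (orbit TG act) (orbits TG X act)) (orbit TG act)"
    using Hausdorff Baire Gi_compact G_union two_orbits dense_orbits
    by (rule orbit_quotient_not_COMP)
qed

end
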